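(* For each $n\ge1$ let $x_1,\dots,x_n\in\mathbb{R}^p$, induced points $u_1,\dots,u_s$ chosen from them, $\epsilon>0$ and a cutoff $\eta_{1,n}>0$, and define $\bar K,\bar Z,\bar\Lambda,\tilde K,\tilde Z,\tilde\Lambda$ as in the context. Suppose there is a constant $c_1\in(0,1)$ such that $\bar K_{i\cdot},\bar K_{\cdot i},\tilde K_{i\cdot},\tilde K_{\cdot i}\ge c_1n$ for all $1\le i\le n$ and all $n\ge1$. Then there exists a constant $C_1$ such that $$\|\bar Z\bar\Lambda^{-1}\bar Z^\top-\tilde Z\tilde\Lambda^{-1}\tilde Z^\top\|_2\le C_1\big(\exp(-\eta_{1,n}^2/(4\epsilon^2))+\eta_{2,n}/\epsilon\big),$$ where $\eta_{2,n}=\sup_{1\le i\le n}\|x_i-u_{\tau(i)}\|$.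
   Context: $\|\cdot\|_2$ is the spectral norm; $B_{i\cdot}=\sum_jB_{ij}$, $B_{\cdot j}=\sum_iB_{ij}$. Let $k(x,x')=\exp(-\|x-x'\|^2/(4\epsilon^2))$ and $k_{\eta_{1,n}}(x,x')=k(x,x')\mathbf 1_{\{\|x-x'\|<\eta_{1,n}\}}$. One-step: $\bar K_{ij}=k(x_i,x_j)$, $\bar A_{ij}=k(x_i,x_j)/(\bar K_{i\cdot}\bar K_{\cdot j})$, $\bar Z_{ij}=\bar A_{ij}/\bar A_{i\cdot}$, $\bar\Lambda=\mathrm{diag}(\bar Z_{\cdot i})$. For each $i$, $u_{\tau(i)}$ is the induced point nearest to $x_i$. $\tilde K_{ij}=k_{\eta_{1,n}}(x_i,u_{\tau(j)})$, $\tilde A_{ij}=\tilde K_{ij}/(\tilde K_{i\cdot}\tilde K_{\cdot j})$, $\tilde Z_{ij}=\tilde A_{ij}/\tilde A_{i\cdot}$, $\tilde\Lambda=\mathrm{diag}(\tilde Z_{\cdot i})$, all for $1\le i,j\le n$. *)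

theory Defs
  imports "HOL-Analysis.Analysis"
begin

text \<open>Matrices of size n x n are represented as functions nat => nat => real,
  with indices 0..n-1 (the paper's indices 1..n shifted by one).\<close>

definition gauss_kernel :: "real \<Rightarrow> 'a::real_normed_vector \<Rightarrow> 'a \<Rightarrow> real" where
  "gauss_kernel \<epsilon> x y = exp (- (norm (x - y))\<^sup>2 / (4 * \<epsilon>\<^sup>2))"

definition trunc_kernel :: "real \<Rightarrow> real \<Rightarrow> 'a::real_normed_vector \<Rightarrow> 'a \<Rightarrow> real" where
  "trunc_kernel \<epsilon> \<eta> x y = (if norm (x - y) < \<eta> then gauss_kernel \<epsilon> x y else 0)"

definition row_sum :: "nat \<Rightarrow> (nat \<Rightarrow> nat \<Rightarrow> real) \<Rightarrow> nat \<Rightarrow> real" where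
  "row_sum n B i = (\<Sum>j<n. B i j)"

definition col_sum :: "nat \<Rightarrow> (nat \<Rightarrow> nat \<Rightarrow> real) \<Rightarrow> nat \<Rightarrow> real" where
  "col_sum n B j = (\<Sum>i<n. B i j)"

definition norm_A :: "nat \<Rightarrow> (nat \<Rightarrow> nat \<Rightarrow> real) \<Rightarrow> nat \<Rightarrow> nat \<Rightarrow> real" where
  "norm_A n K i j = K i j / (row_sum n K i * col_sum n K j)"

definition norm_Z :: "nat \<Rightarrow> (nat \<Rightarrow> nat \<Rightarrow> real) \<Rightarrow> nat \<Rightarrow> nat \<Rightarrow> real" where
  "norm_Z n K i j = norm_A n K i j / row_sum n (norm_A n K) i"

text \<open>Z Lambda^{-1} Z^T with Lambda = diag(Z_{.j})\<close>
definition ZLZt :: "nat \<Rightarrow> (nat \<Rightarrow> nat \<Rightarrow> real) \<Rightarrow> nat \<Rightarrow> nat \<Rightarrow> real" where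
  "ZLZt n Z i k = (\<Sum>j<n. Z i j * (1 / col_sum n Z j) * Z k j)"

definition spec_norm :: "nat \<Rightarrow> (nat \<Rightarrow> nat \<Rightarrow> real) \<Rightarrow> real" where
  "spec_norm n M = (SUP v \<in> {v :: nat \<Rightarrow> real. L2_set v {..<n} \<le> 1}.
       L2_set (\<lambda>i. \<Sum>j<n. M i j * v j) {..<n})"

end

theory Submission
  imports Defs
begin

(* Entrywise, the two kernel matrices differ by at most
   delta = exp (- eta1^2 / (4 eps^2)) + eta2 / eps: since exp (- t^2) is 1-Lipschitz, the Gaussian
   kernel moves by at most eta2 / eps when x_j is replaced by its induced point, and an entry
   removed by the cutoff is at most exp (- eta1^2 / (4 eps^2)).
   The lower bounds c n on all row and column sums keep every normalisation well conditioned
   (entries of A are O(1/n^2), entries of Z are O(1/n), column sums of Z are at least c^2), so the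
   perturbation propagates through A, Z and Z Lambda^-1 Z^T with constants depending only on c,
   and the entries of the difference are O(delta / n). An n x n matrix whose entries are bounded
   by m has spectral norm at most n m. *)

lemma abs_exp_neg_square_diff_le:
  fixes a b :: real
  shows "\<bar>exp (- a\<^sup>2) - exp (- b\<^sup>2)\<bar> \<le> \<bar>a - b\<bar>"
proof -
  have less: "\<bar>exp (- a\<^sup>2) - exp (- b\<^sup>2)\<bar> \<le> \<bar>a - b\<bar>" if "a < b" for a b :: real
  proof -
    have "\<And>t. a \<le> t \<Longrightarrow> t \<le> b \<Longrightarrow> DERIV (\<lambda>t. exp (- t\<^sup>2)) t :> exp (- t\<^sup>2) * (- (2 * t))"
      by (auto intro!: derivative_eq_intros)
    from MVT2[OF that this] obtain z
      where z: "exp (- b\<^sup>2) - exp (- a\<^sup>2) = (b - a) * (exp (- z\<^sup>2) * (- (2 * z)))"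
      by blast
    have "\<bar>2 * z\<bar> \<le> 1 + z\<^sup>2"
      using zero_le_power2[of "\<bar>z\<bar> - 1"] unfolding power2_diff power2_abs by (simp add: abs_mult)
    also have "\<dots> \<le> exp (z\<^sup>2)"
      using exp_ge_add_one_self[of "z\<^sup>2"] by simp
    finally have "\<bar>exp (- z\<^sup>2) * (- (2 * z))\<bar> \<le> 1"
      by (simp add: abs_mult exp_minus field_simps)
    then have "\<bar>(b - a) * (exp (- z\<^sup>2) * (- (2 * z)))\<bar> \<le> \<bar>b - a\<bar>"
      by (metis abs_ge_zero abs_mult mult.right_neutral mult_left_mono)
    then show ?thesis
      using z by (simp add: abs_minus_commute)
  qed
  show ?thesis
    using less[of a b] less[of b a] by (cases a b rule: linorder_cases) (auto simp: abs_minus_commute)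
qed

lemma gauss_kernel_nonneg: "0 \<le> gauss_kernel \<epsilon> x y"
  and gauss_kernel_le_one: "gauss_kernel \<epsilon> x y \<le> 1"
  unfolding gauss_kernel_def by auto

lemma trunc_kernel_nonneg: "0 \<le> trunc_kernel \<epsilon> \<eta> x y"
  and trunc_kernel_le_one: "trunc_kernel \<epsilon> \<eta> x y \<le> 1"
  unfolding trunc_kernel_def using gauss_kernel_nonneg gauss_kernel_le_one by auto

lemma gauss_kernel_lipschitz:
  assumes "\<epsilon> > 0"
  shows "\<bar>gauss_kernel \<epsilon> x y - gauss_kernel \<epsilon> x z\<bar> \<le> norm (y - z) / \<epsilon>"
proof -
  have exp_form: "gauss_kernel \<epsilon> x w = exp (- (norm (x - w) / (2 * \<epsilon>))\<^sup>2)" for w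
    using assms unfolding gauss_kernel_def by (simp add: power_divide power_mult_distrib)
  have "\<bar>gauss_kernel \<epsilon> x y - gauss_kernel \<epsilon> x z\<bar>
      \<le> \<bar>norm (x - y) / (2 * \<epsilon>) - norm (x - z) / (2 * \<epsilon>)\<bar>"
    unfolding exp_form by (rule abs_exp_neg_square_diff_le)
  also have "\<dots> = \<bar>norm (x - y) - norm (x - z)\<bar> / (2 * \<epsilon>)"
    using assms by (simp add: diff_divide_distrib[symmetric])
  also have "\<dots> \<le> norm (y - z) / (2 * \<epsilon>)"
    using assms norm_triangle_ineq3[of "x - y" "x - z"]
    by (intro divide_right_mono) (auto simp: norm_minus_commute)
  also have "\<dots> \<le> norm (y - z) / \<epsilon>"
    using assms by (simp add: frac_le)
  finally show ?thesis .
qed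

lemma abs_gauss_minus_trunc_kernel_le:
  assumes "\<epsilon> > 0" and "\<eta> \<ge> 0" and "norm (y - z) \<le> d"
  shows "\<bar>gauss_kernel \<epsilon> x y - trunc_kernel \<epsilon> \<eta> x z\<bar> \<le> exp (- \<eta>\<^sup>2 / (4 * \<epsilon>\<^sup>2)) + d / \<epsilon>"
proof -
  have lip: "\<bar>gauss_kernel \<epsilon> x y - gauss_kernel \<epsilon> x z\<bar> \<le> d / \<epsilon>"
    using gauss_kernel_lipschitz[OF assms(1)] divide_right_mono[OF assms(3)] assms(1)
    by (meson less_imp_le order_trans)
  show ?thesis
  proof (cases "norm (x - z) < \<eta>")
    case True
    then show ?thesis
      using lip by (simp add: trunc_kernel_def add.commute add_increasing2)
  next
    case False
    then have "gauss_kernel \<epsilon> x z \<le> exp (- \<eta>\<^sup>2 / (4 * \<epsilon>\<^sup>2))"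
      unfolding gauss_kernel_def using assms(2) by (auto intro!: divide_right_mono power_mono)
    then show ?thesis
      using False lip gauss_kernel_nonneg[of \<epsilon> x y] by (simp add: trunc_kernel_def)
  qed
qed

lemma abs_sum_diff_le:
  fixes f g :: "nat \<Rightarrow> real"
  assumes "\<And>j. j < n \<Longrightarrow> \<bar>f j - g j\<bar> \<le> \<delta>"
  shows "\<bar>(\<Sum>j<n. f j) - (\<Sum>j<n. g j)\<bar> \<le> real n * \<delta>"
proof -
  have "\<bar>(\<Sum>j<n. f j) - (\<Sum>j<n. g j)\<bar> \<le> (\<Sum>j<n. \<bar>f j - g j\<bar>)"
    unfolding sum_subtractf[symmetric] by (rule sum_abs)
  also have "\<dots> \<le> real (card {..<n}) * \<delta>"
    by (rule sum_bounded_above) (use assms in auto)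
  finally show ?thesis by simp
qed

lemma abs_mult_diff_le:
  fixes x y x' y' :: real
  assumes "\<bar>x\<bar> \<le> X" "\<bar>y'\<bar> \<le> Y" "\<bar>x - x'\<bar> \<le> \<alpha>" "\<bar>y - y'\<bar> \<le> \<beta>"
  shows "\<bar>x * y - x' * y'\<bar> \<le> X * \<beta> + \<alpha> * Y"
proof -
  have "\<bar>x * (y - y')\<bar> \<le> X * \<beta>" "\<bar>(x - x') * y'\<bar> \<le> \<alpha> * Y"
    unfolding abs_mult using assms by (auto intro!: mult_mono)
  moreover have "x * y - x' * y' = x * (y - y') + (x - x') * y'"
    by (simp add: algebra_simps)
  ultimately show ?thesis
    using abs_triangle_ineq[of "x * (y - y')" "(x - x') * y'"] by linarith
qed

lemma abs_divide_diff_le: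
  fixes x y x' y' :: real
  assumes "0 < m" "m \<le> y" "m \<le> y'"
    and "\<bar>x\<bar> \<le> X" "\<bar>x - x'\<bar> \<le> \<alpha>" "\<bar>y - y'\<bar> \<le> \<beta>"
  shows "\<bar>x / y - x' / y'\<bar> \<le> \<alpha> / m + X * \<beta> / m\<^sup>2"
proof -
  have pos: "y > 0" "y' > 0"
    using assms by auto
  have "\<bar>(x - x') / y'\<bar> \<le> \<alpha> / m"
    unfolding abs_divide using assms pos by (intro frac_le) auto
  moreover have "\<bar>x * (y' - y) / (y * y')\<bar> \<le> X * \<beta> / m\<^sup>2"
  proof -
    have "\<bar>x * (y' - y)\<bar> \<le> X * \<beta>"
      unfolding abs_mult using assms by (intro mult_mono) (auto simp: abs_minus_commute)
    moreover have "m\<^sup>2 \<le> y * y'"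
      unfolding power2_eq_square using assms by (intro mult_mono) auto
    ultimately show ?thesis
      unfolding abs_divide using assms pos by (intro frac_le) (auto intro: order_trans[OF abs_ge_zero])
  qed
  moreover have "x / y - x' / y' = (x - x') / y' + x * (y' - y) / (y * y')"
    using pos by (simp add: field_simps)
  ultimately show ?thesis
    using abs_triangle_ineq[of "(x - x') / y'" "x * (y' - y) / (y * y')"] by linarith
qed

lemma divide_mult_power_mono:
  fixes c t M :: real
  assumes "0 < c" "c \<le> 1" "a \<le> b" "0 \<le> t" "0 < M"
  shows "t / (c ^ a * M) \<le> t / (c ^ b * M)"
  using assms by (intro divide_left_mono mult_right_mono power_decreasing mult_pos_pos) auto

locale kernel_matrix =
  fixes n :: nat and c :: real and K :: "nat \<Rightarrow> nat \<Rightarrow> real"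
  assumes n_pos: "n \<ge> 1"
    and c_pos: "0 < c" and c_le_one: "c \<le> 1"
    and entry_nonneg: "\<And>i j. i < n \<Longrightarrow> j < n \<Longrightarrow> 0 \<le> K i j"
    and entry_le_one: "\<And>i j. i < n \<Longrightarrow> j < n \<Longrightarrow> K i j \<le> 1"
    and row_sum_ge: "\<And>i. i < n \<Longrightarrow> c * n \<le> row_sum n K i"
    and col_sum_ge: "\<And>j. j < n \<Longrightarrow> c * n \<le> col_sum n K j"
begin

lemma cn_pos: "0 < c * n"
  using c_pos n_pos by simp

lemma row_sum_pos: "i < n \<Longrightarrow> 0 < row_sum n K i"
  using row_sum_ge cn_pos by (rule less_le_trans[rotated])

lemma col_sum_pos: "j < n \<Longrightarrow> 0 < col_sum n K j"
  using col_sum_ge cn_pos by (rule less_le_trans[rotated])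

lemma row_sum_le: "i < n \<Longrightarrow> row_sum n K i \<le> n"
  and col_sum_le: "j < n \<Longrightarrow> col_sum n K j \<le> n"
  using sum_bounded_above[of "{..<n}" "K i" 1] sum_bounded_above[of "{..<n}" "\<lambda>i. K i j" 1]
  by (auto simp: row_sum_def col_sum_def entry_le_one)

lemma row_col_sum_product_ge:
  assumes "i < n" "j < n"
  shows "c\<^sup>2 * (real n)\<^sup>2 \<le> row_sum n K i * col_sum n K j"
proof -
  have "(c * n) * (c * n) \<le> row_sum n K i * col_sum n K j"
    using assms row_sum_ge col_sum_ge c_pos row_sum_pos[of i] by (intro mult_mono) auto
  then show ?thesis
    by (simp add: power2_eq_square algebra_simps)
qed

lemma norm_A_nonneg:
  assumes "i < n" "j < n"
  shows "0 \<le> norm_A n K i j"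
  unfolding norm_A_def using entry_nonneg[OF assms] row_sum_pos[OF assms(1)] col_sum_pos[OF assms(2)]
  by simp

lemma norm_A_le:
  assumes "i < n" "j < n"
  shows "norm_A n K i j \<le> 1 / (c\<^sup>2 * (real n)\<^sup>2)"
proof -
  have "norm_A n K i j \<le> 1 / (row_sum n K i * col_sum n K j)"
    unfolding norm_A_def using entry_le_one[OF assms] row_sum_pos[OF assms(1)] col_sum_pos[OF assms(2)]
    by (intro divide_right_mono) auto
  also have "\<dots> \<le> 1 / (c\<^sup>2 * (real n)\<^sup>2)"
    using assms row_col_sum_product_ge c_pos n_pos row_sum_pos col_sum_pos
    by (intro divide_left_mono mult_pos_pos) auto
  finally show ?thesis .
qed

text \<open>Since every row and column sum of \<open>K\<close> is at most \<open>n\<close>, the row and column sums of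
  \<open>A\<close> are at least \<open>1 / n\<close>.\<close>

lemma row_sum_norm_A_ge:
  assumes "i < n"
  shows "1 / n \<le> row_sum n (norm_A n K) i"
proof -
  have "1 / n = (\<Sum>j<n. K i j / (row_sum n K i * n))"
    using row_sum_pos[OF assms] unfolding sum_divide_distrib[symmetric] row_sum_def by simp
  also have "\<dots> \<le> row_sum n (norm_A n K) i"
    unfolding row_sum_def[of n "norm_A n K"] norm_A_def using assms
    by (intro sum_mono divide_left_mono mult_left_mono)
      (auto intro!: mult_pos_pos simp: entry_nonneg col_sum_le col_sum_pos row_sum_pos less_imp_le[OF row_sum_pos])
  finally show ?thesis .
qed

lemma col_sum_norm_A_ge:
  assumes "j < n"
  shows "1 / n \<le> col_sum n (norm_A n K) j"
proof -
  have "1 / n = (\<Sum>i<n. K i j / (n * col_sum n K j))"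
    using col_sum_pos[OF assms] unfolding sum_divide_distrib[symmetric] col_sum_def by simp
  also have "\<dots> \<le> col_sum n (norm_A n K) j"
    unfolding col_sum_def[of n "norm_A n K"] norm_A_def using assms
    by (intro sum_mono divide_left_mono mult_right_mono)
      (auto intro!: mult_pos_pos simp: entry_nonneg row_sum_le row_sum_pos col_sum_pos less_imp_le[OF col_sum_pos])
  finally show ?thesis .
qed

lemma row_sum_norm_A_le:
  assumes "i < n"
  shows "row_sum n (norm_A n K) i \<le> 1 / (c\<^sup>2 * n)"
proof -
  have "row_sum n (norm_A n K) i \<le> real (card {..<n}) * (1 / (c\<^sup>2 * (real n)\<^sup>2))"
    unfolding row_sum_def using assms by (intro sum_bounded_above) (auto simp: norm_A_le)
  then show ?thesis
    using n_pos by (simp add: power2_eq_square)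
qed

lemma row_sum_norm_A_pos: "i < n \<Longrightarrow> 0 < row_sum n (norm_A n K) i"
  using n_pos by (intro less_le_trans[OF _ row_sum_norm_A_ge]) auto

lemma norm_Z_nonneg:
  assumes "i < n" "j < n"
  shows "0 \<le> norm_Z n K i j"
  unfolding norm_Z_def using norm_A_nonneg[OF assms] row_sum_norm_A_pos[OF assms(1)] by simp

lemma norm_Z_le:
  assumes "i < n" "j < n"
  shows "norm_Z n K i j \<le> 1 / (c\<^sup>2 * n)"
proof -
  have "norm_Z n K i j \<le> norm_A n K i j / (1 / n)"
    unfolding norm_Z_def using assms n_pos row_sum_norm_A_ge row_sum_norm_A_pos
    by (intro divide_left_mono mult_pos_pos) (auto simp: norm_A_nonneg)
  also have "\<dots> = norm_A n K i j * n"
    by simp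
  also have "\<dots> \<le> 1 / (c\<^sup>2 * (real n)\<^sup>2) * n"
    using assms norm_A_le by (intro mult_right_mono) auto
  also have "\<dots> = 1 / (c\<^sup>2 * n)"
    by (simp add: power2_eq_square)
  finally show ?thesis .
qed

lemma col_sum_norm_Z_ge:
  assumes "j < n"
  shows "c\<^sup>2 \<le> col_sum n (norm_Z n K) j"
proof -
  have "c\<^sup>2 = 1 / n * (c\<^sup>2 * n)"
    using n_pos by simp
  also have "\<dots> \<le> col_sum n (norm_A n K) j * (c\<^sup>2 * n)"
    using assms col_sum_norm_A_ge by (intro mult_right_mono) auto
  also have "\<dots> = (\<Sum>i<n. norm_A n K i j / (1 / (c\<^sup>2 * n)))"
    unfolding col_sum_def sum_distrib_right by simp
  also have "\<dots> \<le> col_sum n (norm_Z n K) j"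
    unfolding col_sum_def[of n "norm_Z n K"] norm_Z_def using assms c_pos n_pos
    by (intro sum_mono divide_left_mono)
      (auto simp: norm_A_nonneg row_sum_norm_A_le row_sum_norm_A_pos)
  finally show ?thesis .
qed

end

locale close_kernel_matrices =
  K: kernel_matrix n c K + K': kernel_matrix n c K' for n c K K' +
  fixes \<delta> :: real
  assumes entry_diff_le: "\<And>i j. i < n \<Longrightarrow> j < n \<Longrightarrow> \<bar>K i j - K' i j\<bar> \<le> \<delta>"
begin

lemma delta_nonneg: "0 \<le> \<delta>"
  using entry_diff_le[of 0 0] K.n_pos by force

lemma n_pos_real: "0 < real n"
  using K.n_pos by simp

lemma row_sum_diff_le: "i < n \<Longrightarrow> \<bar>row_sum n K i - row_sum n K' i\<bar> \<le> n * \<delta>"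
  unfolding row_sum_def by (rule abs_sum_diff_le) (rule entry_diff_le)

lemma col_sum_diff_le: "j < n \<Longrightarrow> \<bar>col_sum n K j - col_sum n K' j\<bar> \<le> n * \<delta>"
  unfolding col_sum_def by (rule abs_sum_diff_le) (rule entry_diff_le)

lemma row_col_sum_product_diff_le:
  assumes "i < n" "j < n"
  shows "\<bar>row_sum n K i * col_sum n K j - row_sum n K' i * col_sum n K' j\<bar> \<le> 2 * (real n)\<^sup>2 * \<delta>"
proof -
  have "\<bar>row_sum n K i * col_sum n K j - row_sum n K' i * col_sum n K' j\<bar> \<le> n * (n * \<delta>) + (n * \<delta>) * n"
    using assms K.row_sum_le K.row_sum_pos K'.col_sum_le K'.col_sum_pos
    by (intro abs_mult_diff_le row_sum_diff_le col_sum_diff_le) (auto simp: abs_of_pos)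
  then show ?thesis
    by (simp add: power2_eq_square algebra_simps)
qed

lemma norm_A_diff_le:
  assumes "i < n" "j < n"
  shows "\<bar>norm_A n K i j - norm_A n K' i j\<bar> \<le> 3 * \<delta> / (c ^ 4 * (real n)\<^sup>2)"
proof -
  have "\<bar>norm_A n K i j - norm_A n K' i j\<bar>
      \<le> \<delta> / (c\<^sup>2 * (real n)\<^sup>2) + 1 * (2 * (real n)\<^sup>2 * \<delta>) / (c\<^sup>2 * (real n)\<^sup>2)\<^sup>2"
    unfolding norm_A_def using assms K.c_pos n_pos_real K.entry_nonneg K.entry_le_one
    by (intro abs_divide_diff_le entry_diff_le row_col_sum_product_diff_le
        K.row_col_sum_product_ge K'.row_col_sum_product_ge) auto
  also have "\<dots> = \<delta> / (c ^ 2 * (real n)\<^sup>2) + 2 * \<delta> / (c ^ 4 * (real n)\<^sup>2)"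
    using K.c_pos n_pos_real by (simp add: field_simps eval_nat_numeral)
  also have "\<dots> \<le> \<delta> / (c ^ 4 * (real n)\<^sup>2) + 2 * \<delta> / (c ^ 4 * (real n)\<^sup>2)"
    using K.c_pos K.c_le_one delta_nonneg n_pos_real
    by (intro add_right_mono divide_mult_power_mono) auto
  also have "\<dots> = 3 * \<delta> / (c ^ 4 * (real n)\<^sup>2)"
    unfolding add_divide_distrib[symmetric] by simp
  finally show ?thesis .
qed

lemma row_sum_norm_A_diff_le:
  assumes "i < n"
  shows "\<bar>row_sum n (norm_A n K) i - row_sum n (norm_A n K') i\<bar> \<le> 3 * \<delta> / (c ^ 4 * n)"
proof -
  have "\<bar>row_sum n (norm_A n K) i - row_sum n (norm_A n K') i\<bar> \<le> n * (3 * \<delta> / (c ^ 4 * (real n)\<^sup>2))"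
    unfolding row_sum_def[of n "norm_A n K"] row_sum_def[of n "norm_A n K'"]
    using assms by (intro abs_sum_diff_le norm_A_diff_le)
  then show ?thesis
    using n_pos_real by (simp add: power2_eq_square)
qed

lemma norm_Z_diff_le:
  assumes "i < n" "j < n"
  shows "\<bar>norm_Z n K i j - norm_Z n K' i j\<bar> \<le> 6 * \<delta> / (c ^ 6 * n)"
proof -
  have "\<bar>norm_Z n K i j - norm_Z n K' i j\<bar>
      \<le> (3 * \<delta> / (c ^ 4 * (real n)\<^sup>2)) / (1 / n)
        + (1 / (c\<^sup>2 * (real n)\<^sup>2)) * (3 * \<delta> / (c ^ 4 * n)) / (1 / n)\<^sup>2"
    unfolding norm_Z_def using assms n_pos_real K.norm_A_nonneg K.norm_A_le
    by (intro abs_divide_diff_le norm_A_diff_le row_sum_norm_A_diff_le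
        K.row_sum_norm_A_ge K'.row_sum_norm_A_ge) auto
  also have "\<dots> = 3 * \<delta> / (c ^ 4 * n) + 3 * \<delta> / (c ^ 6 * n)"
    using K.c_pos n_pos_real by (simp add: field_simps eval_nat_numeral)
  also have "\<dots> \<le> 6 * \<delta> / (c ^ 6 * n)"
    using divide_mult_power_mono[of c 4 6 "3 * \<delta>" n] K.c_pos K.c_le_one delta_nonneg n_pos_real
    by simp
  finally show ?thesis .
qed

lemma col_sum_norm_Z_diff_le:
  assumes "j < n"
  shows "\<bar>col_sum n (norm_Z n K) j - col_sum n (norm_Z n K') j\<bar> \<le> 6 * \<delta> / c ^ 6"
proof -
  have "\<bar>col_sum n (norm_Z n K) j - col_sum n (norm_Z n K') j\<bar> \<le> n * (6 * \<delta> / (c ^ 6 * n))"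
    unfolding col_sum_def[of n "norm_Z n K"] col_sum_def[of n "norm_Z n K'"]
    using assms by (intro abs_sum_diff_le norm_Z_diff_le)
  then show ?thesis
    using n_pos_real by simp
qed


lemma ZLZt_summand_diff_le:
  assumes "i < n" "k < n" "j < n"
  shows "\<bar>norm_Z n K i j * (1 / col_sum n (norm_Z n K) j) * norm_Z n K k j
      - norm_Z n K' i j * (1 / col_sum n (norm_Z n K') j) * norm_Z n K' k j\<bar>
    \<le> 18 * \<delta> / (c ^ 14 * (real n)\<^sup>2)"
proof -
  have product_diff: "\<bar>norm_Z n K i j * norm_Z n K k j - norm_Z n K' i j * norm_Z n K' k j\<bar>
      \<le> 1 / (c\<^sup>2 * n) * (6 * \<delta> / (c ^ 6 * n)) + (6 * \<delta> / (c ^ 6 * n)) * (1 / (c\<^sup>2 * n))"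
    using assms K.norm_Z_nonneg K.norm_Z_le K'.norm_Z_nonneg K'.norm_Z_le
    by (intro abs_mult_diff_le norm_Z_diff_le) auto
  have product_le: "\<bar>norm_Z n K i j * norm_Z n K k j\<bar> \<le> 1 / (c\<^sup>2 * n) * (1 / (c\<^sup>2 * n))"
    unfolding abs_mult using assms K.norm_Z_nonneg K.norm_Z_le by (intro mult_mono) auto
  have "\<bar>norm_Z n K i j * (1 / col_sum n (norm_Z n K) j) * norm_Z n K k j
      - norm_Z n K' i j * (1 / col_sum n (norm_Z n K') j) * norm_Z n K' k j\<bar>
    = \<bar>norm_Z n K i j * norm_Z n K k j / col_sum n (norm_Z n K) j
      - norm_Z n K' i j * norm_Z n K' k j / col_sum n (norm_Z n K') j\<bar>"
    by simp
  also have "\<dots> \<le> (1 / (c\<^sup>2 * n) * (6 * \<delta> / (c ^ 6 * n)) + (6 * \<delta> / (c ^ 6 * n)) * (1 / (c\<^sup>2 * n))) / c\<^sup>2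
      + (1 / (c\<^sup>2 * n) * (1 / (c\<^sup>2 * n))) * (6 * \<delta> / c ^ 6) / (c\<^sup>2)\<^sup>2"
    using assms K.c_pos product_diff product_le
    by (intro abs_divide_diff_le col_sum_norm_Z_diff_le K.col_sum_norm_Z_ge K'.col_sum_norm_Z_ge) auto
  also have "\<dots> = 12 * \<delta> / (c ^ 10 * (real n)\<^sup>2) + 6 * \<delta> / (c ^ 14 * (real n)\<^sup>2)"
    using K.c_pos n_pos_real by (simp add: field_simps eval_nat_numeral)
  also have "\<dots> \<le> 12 * \<delta> / (c ^ 14 * (real n)\<^sup>2) + 6 * \<delta> / (c ^ 14 * (real n)\<^sup>2)"
    using K.c_pos K.c_le_one delta_nonneg n_pos_real
    by (intro add_right_mono divide_mult_power_mono) auto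
  also have "\<dots> = 18 * \<delta> / (c ^ 14 * (real n)\<^sup>2)"
    unfolding add_divide_distrib[symmetric] by simp
  finally show ?thesis .
qed

lemma ZLZt_diff_le:
  assumes "i < n" "k < n"
  shows "\<bar>ZLZt n (norm_Z n K) i k - ZLZt n (norm_Z n K') i k\<bar> \<le> 18 * \<delta> / (c ^ 14 * n)"
proof -
  have "\<bar>ZLZt n (norm_Z n K) i k - ZLZt n (norm_Z n K') i k\<bar> \<le> n * (18 * \<delta> / (c ^ 14 * (real n)\<^sup>2))"
    unfolding ZLZt_def using assms by (intro abs_sum_diff_le ZLZt_summand_diff_le)
  then show ?thesis
    using n_pos_real by (simp add: power2_eq_square)
qed

end

lemma spec_norm_le_entrywise:
  fixes M :: "nat \<Rightarrow> nat \<Rightarrow> real"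
  assumes "n \<ge> 1" and entry_le: "\<And>i k. i < n \<Longrightarrow> k < n \<Longrightarrow> \<bar>M i k\<bar> \<le> m"
  shows "spec_norm n M \<le> n * m"
  unfolding spec_norm_def
proof (rule cSUP_least)
  show "{v. L2_set v {..<n} \<le> 1} \<noteq> {}"
    by (auto intro!: exI[of _ "\<lambda>_. 0"] simp: L2_set_def)
next
  fix v :: "nat \<Rightarrow> real"
  assume "v \<in> {v. L2_set v {..<n} \<le> 1}"
  then have v: "L2_set v {..<n} \<le> 1"
    by simp
  have m: "0 \<le> m"
    using entry_le[of 0 0] assms(1) by force
  have row: "\<bar>\<Sum>j<n. M i j * v j\<bar> \<le> m * sqrt n" if "i < n" for i
  proof -
    have "\<bar>\<Sum>j<n. M i j * v j\<bar> \<le> m * (\<Sum>j<n. \<bar>1\<bar> * \<bar>v j\<bar>)"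
      unfolding sum_distrib_left
      by (rule order_trans[OF sum_abs sum_mono]) (auto simp: abs_mult that entry_le intro: mult_right_mono)
    also have "\<dots> \<le> m * (L2_set (\<lambda>_. 1) {..<n} * L2_set v {..<n})"
      by (rule mult_left_mono[OF L2_set_mult_ineq m])
    also have "\<dots> \<le> m * sqrt n"
      unfolding L2_set_constant using v m by (intro mult_left_mono) (auto intro: mult_left_le)
    finally show ?thesis .
  qed
  have "L2_set (\<lambda>i. \<Sum>j<n. M i j * v j) {..<n} = L2_set (\<lambda>i. \<bar>\<Sum>j<n. M i j * v j\<bar>) {..<n}"
    by (simp add: L2_set_def)
  also have "\<dots> \<le> L2_set (\<lambda>_. m * sqrt n) {..<n}"
    by (rule L2_set_mono) (use row in auto)
  also have "\<dots> = n * m"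
    unfolding L2_set_constant using m by (simp add: abs_mult mult.commute[of m] mult.assoc[symmetric])
  finally show "L2_set (\<lambda>i. \<Sum>j<n. M i j * v j) {..<n} \<le> n * m" .
qed

lemma (in close_kernel_matrices) spec_norm_ZLZt_diff_le:
  "spec_norm n (\<lambda>i k. ZLZt n (norm_Z n K) i k - ZLZt n (norm_Z n K') i k) \<le> 18 / c ^ 14 * \<delta>"
proof -
  have "spec_norm n (\<lambda>i k. ZLZt n (norm_Z n K) i k - ZLZt n (norm_Z n K') i k)
      \<le> n * (18 * \<delta> / (c ^ 14 * n))"
    using K.n_pos by (intro spec_norm_le_entrywise ZLZt_diff_le)
  then show ?thesis
    using n_pos_real by simp
qed

lemma spec_norm_ZLZt_gauss_minus_trunc_le:
  fixes x u :: "nat \<Rightarrow> 'a::real_normed_vector" and \<tau> :: "nat \<Rightarrow> nat"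
  assumes "n \<ge> 1" "0 < \<epsilon>" "0 \<le> \<eta>" "0 < c" "c \<le> 1"
    and "\<And>i. i < n \<Longrightarrow> c * n \<le> row_sum n (\<lambda>i j. gauss_kernel \<epsilon> (x i) (x j)) i"
    and "\<And>j. j < n \<Longrightarrow> c * n \<le> col_sum n (\<lambda>i j. gauss_kernel \<epsilon> (x i) (x j)) j"
    and "\<And>i. i < n \<Longrightarrow> c * n \<le> row_sum n (\<lambda>i j. trunc_kernel \<epsilon> \<eta> (x i) (u (\<tau> j))) i"
    and "\<And>j. j < n \<Longrightarrow> c * n \<le> col_sum n (\<lambda>i j. trunc_kernel \<epsilon> \<eta> (x i) (u (\<tau> j))) j"
  shows "spec_norm n (\<lambda>i k.
        ZLZt n (norm_Z n (\<lambda>i j. gauss_kernel \<epsilon> (x i) (x j))) i k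
      - ZLZt n (norm_Z n (\<lambda>i j. trunc_kernel \<epsilon> \<eta> (x i) (u (\<tau> j)))) i k)
    \<le> 18 / c ^ 14 * (exp (- \<eta>\<^sup>2 / (4 * \<epsilon>\<^sup>2)) + Max ((\<lambda>i. norm (x i - u (\<tau> i))) ` {..<n}) / \<epsilon>)"
proof -
  have "\<bar>gauss_kernel \<epsilon> (x i) (x j) - trunc_kernel \<epsilon> \<eta> (x i) (u (\<tau> j))\<bar>
      \<le> exp (- \<eta>\<^sup>2 / (4 * \<epsilon>\<^sup>2)) + Max ((\<lambda>i. norm (x i - u (\<tau> i))) ` {..<n}) / \<epsilon>"
    if "j < n" for i j
    using assms(2,3) that by (intro abs_gauss_minus_trunc_kernel_le Max_ge) auto
  then interpret close_kernel_matrices n c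
      "\<lambda>i j. gauss_kernel \<epsilon> (x i) (x j)" "\<lambda>i j. trunc_kernel \<epsilon> \<eta> (x i) (u (\<tau> j))"
      "exp (- \<eta>\<^sup>2 / (4 * \<epsilon>\<^sup>2)) + Max ((\<lambda>i. norm (x i - u (\<tau> i))) ` {..<n}) / \<epsilon>"
    using assms by unfold_locales
      (auto simp: gauss_kernel_nonneg gauss_kernel_le_one trunc_kernel_nonneg trunc_kernel_le_one)
  show ?thesis
    by (rule spec_norm_ZLZt_diff_le)
qed

theorem lemma2:
  fixes x :: "nat \<Rightarrow> nat \<Rightarrow> 'a::euclidean_space"
    and u :: "nat \<Rightarrow> nat \<Rightarrow> 'a"
    and s :: "nat \<Rightarrow> nat"
    and \<tau> :: "nat \<Rightarrow> nat \<Rightarrow> nat"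
    and \<epsilon> :: real
    and \<eta>1 :: "nat \<Rightarrow> real"
    and c1 :: real
  assumes eps_pos: "\<epsilon> > 0"
    and eta1_pos: "\<And>n. n \<ge> 1 \<Longrightarrow> \<eta>1 n > 0"
    and induced: "\<And>n j. n \<ge> 1 \<Longrightarrow> j < s n \<Longrightarrow> \<exists>i<n. u n j = x n i"
    and tau_range: "\<And>n i. n \<ge> 1 \<Longrightarrow> i < n \<Longrightarrow> \<tau> n i < s n"
    and tau_nearest: "\<And>n i j. n \<ge> 1 \<Longrightarrow> i < n \<Longrightarrow> j < s n \<Longrightarrow>
         norm (x n i - u n (\<tau> n i)) \<le> norm (x n i - u n j)"
    and c1: "0 < c1" "c1 < 1"
    and Kbar_row: "\<And>n i. n \<ge> 1 \<Longrightarrow> i < n \<Longrightarrow>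
         row_sum n (\<lambda>i j. gauss_kernel \<epsilon> (x n i) (x n j)) i \<ge> c1 * real n"
    and Kbar_col: "\<And>n i. n \<ge> 1 \<Longrightarrow> i < n \<Longrightarrow>
         col_sum n (\<lambda>i j. gauss_kernel \<epsilon> (x n i) (x n j)) i \<ge> c1 * real n"
    and Ktil_row: "\<And>n i. n \<ge> 1 \<Longrightarrow> i < n \<Longrightarrow>
         row_sum n (\<lambda>i j. trunc_kernel \<epsilon> (\<eta>1 n) (x n i) (u n (\<tau> n j))) i \<ge> c1 * real n"
    and Ktil_col: "\<And>n i. n \<ge> 1 \<Longrightarrow> i < n \<Longrightarrow>
         col_sum n (\<lambda>i j. trunc_kernel \<epsilon> (\<eta>1 n) (x n i) (u n (\<tau> n j))) i \<ge> c1 * real n"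
  shows "\<exists>C1. \<forall>n\<ge>1.
    spec_norm n (\<lambda>i k.
        ZLZt n (norm_Z n (\<lambda>i j. gauss_kernel \<epsilon> (x n i) (x n j))) i k
      - ZLZt n (norm_Z n (\<lambda>i j. trunc_kernel \<epsilon> (\<eta>1 n) (x n i) (u n (\<tau> n j)))) i k)
    \<le> C1 * (exp (- (\<eta>1 n)\<^sup>2 / (4 * \<epsilon>\<^sup>2))
             + Max ((\<lambda>i. norm (x n i - u n (\<tau> n i))) ` {..<n}) / \<epsilon>)"
proof -
  \<comment> \<open>The bound holds for any assignment \<open>\<tau>\<close> of induced points, nearest or not: only the
    displacements \<open>norm (x n i - u n (\<tau> n i))\<close> enter, through their maximum.\<close>
  have "spec_norm n (\<lambda>i k.
        ZLZt n (norm_Z n (\<lambda>i j. gauss_kernel \<epsilon> (x n i) (x n j))) i k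
      - ZLZt n (norm_Z n (\<lambda>i j. trunc_kernel \<epsilon> (\<eta>1 n) (x n i) (u n (\<tau> n j)))) i k)
    \<le> 18 / c1 ^ 14 * (exp (- (\<eta>1 n)\<^sup>2 / (4 * \<epsilon>\<^sup>2))
             + Max ((\<lambda>i. norm (x n i - u n (\<tau> n i))) ` {..<n}) / \<epsilon>)"
    if n: "n \<ge> 1" for n
    using n eps_pos eta1_pos[OF n] c1 Kbar_row[OF n] Kbar_col[OF n] Ktil_row[OF n] Ktil_col[OF n]
    by (intro spec_norm_ZLZt_gauss_minus_trunc_le[where x = "x n" and u = "u n" and \<tau> = "\<tau> n"]) auto
  then show ?thesis
    by blast
qed

end
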